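(* Let $N$ be a natural number. For any $\delta\subseteq{}^{\underline N}2$ and $Z\subseteq N$, \[\mathrm{HN}\big(L(\delta,Z)\cup R(\delta,Z)\big)=\min\{\mathrm{HN}(L(\delta,Z)),\mathrm{HN}(R(\delta,Z))\}.\]
   Context: $N=\{0,\ldots,N-1\}$; ${}^{\underline N}2$ is the set of all partial functions $\sigma$ with $\mathrm{dom}(\sigma)\subseteq N$ and values in $\{0,1\}$ (the empty function included); $|\sigma|$ is the size of $\sigma$ (equivalently of its domain). For $\sigma\in{}^{\underline N}2$ and $Z\subseteq N$, $\sigma\restriction Z=\{(a,b)\in\sigma: a\in Z\}$. $L(\delta,Z)=\{\sigma\restriction Z:\sigma\in\delta,\ |\sigma\restriction Z|\geq|\sigma\restriction(N\setminus Z)|\}$ and $R(\delta,Z)=\{\sigma\restriction(N\setminus Z):\sigma\in\delta,\ |\sigma\restriction Z|<|\sigma\restriction(N\setminus Z)|\}$. For $\delta_1,\delta_2\subseteq{}^{\underline N}2$, $\delta_1\preceq\delta_2$ means that for every $\sigma\in\delta_1$ there is $\rho\in\delta_2$ with $\rho\subseteq\sigma$. For $\delta\subseteq{}^{\underline N}2$, $\mathrm{hn}(\delta)$ is the maximum of $k+1$ over those $k\in\{0,\ldots,N-1\}$ such that for every $\delta'\subseteq\delta$ there is $\delta''\subseteq\delta'$ whose elements have pairwise disjoint domains and $|\bigcup_{\sigma\in\delta''}\mathrm{dom}(\sigma)|\geq k|\delta'|$; and $\mathrm{HN}(\delta)=\max\{\mathrm{hn}(\delta'):\delta'\subseteq{}^{\underline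 N}2,\ \delta\preceq\delta'\}$. *)

theory Defs
  imports Main
begin

text \<open>Partial functions from N = {0..<N} to 2 = {0,1}, represented as maps
  nat \<rightharpoonup> bool (False = 0, True = 1) whose domain is contained in {..<N}.\<close>

definition PF :: "nat \<Rightarrow> (nat \<rightharpoonup> bool) set" where
  "PF N = {\<sigma>. dom \<sigma> \<subseteq> {..<N}}"

definition psize :: "(nat \<rightharpoonup> bool) \<Rightarrow> nat" where
  "psize \<sigma> = card (dom \<sigma>)"

definition Lset :: "nat \<Rightarrow> (nat \<rightharpoonup> bool) set \<Rightarrow> nat set \<Rightarrow> (nat \<rightharpoonup> bool) set" where
  "Lset N \<delta> Z = {\<sigma> |` Z | \<sigma>. \<sigma> \<in> \<delta> \<and>
       psize (\<sigma> |` Z) \<ge> psize (\<sigma> |` ({..<N} - Z))}"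

definition Rset :: "nat \<Rightarrow> (nat \<rightharpoonup> bool) set \<Rightarrow> nat set \<Rightarrow> (nat \<rightharpoonup> bool) set" where
  "Rset N \<delta> Z = {\<sigma> |` ({..<N} - Z) | \<sigma>. \<sigma> \<in> \<delta> \<and>
       psize (\<sigma> |` Z) < psize (\<sigma> |` ({..<N} - Z))}"

definition refines :: "(nat \<rightharpoonup> bool) set \<Rightarrow> (nat \<rightharpoonup> bool) set \<Rightarrow> bool" where
  "refines \<delta>1 \<delta>2 \<longleftrightarrow> (\<forall>\<sigma>\<in>\<delta>1. \<exists>\<rho>\<in>\<delta>2. \<rho> \<subseteq>\<^sub>m \<sigma>)"

definition hn_good :: "nat \<Rightarrow> (nat \<rightharpoonup> bool) set \<Rightarrow> bool" where
  "hn_good k \<delta> \<longleftrightarrow> (\<forall>\<delta>'\<subseteq>\<delta>. \<exists>\<delta>''\<subseteq>\<delta>'.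
      (\<forall>\<sigma>\<in>\<delta>''. \<forall>\<tau>\<in>\<delta>''. \<sigma> \<noteq> \<tau> \<longrightarrow> dom \<sigma> \<inter> dom \<tau> = {}) \<and>
      card (\<Union>\<sigma>\<in>\<delta>''. dom \<sigma>) \<ge> k * card \<delta>')"

text \<open>Max of k+1 over admissible k in {0..N-1}; 0 by convention if there is none (only when N = 0).\<close>
definition hn :: "nat \<Rightarrow> (nat \<rightharpoonup> bool) set \<Rightarrow> nat" where
  "hn N \<delta> = Max (insert 0 {k + 1 | k. k < N \<and> hn_good k \<delta>})"

definition HN :: "nat \<Rightarrow> (nat \<rightharpoonup> bool) set \<Rightarrow> nat" where
  "HN N \<delta> = Max {hn N \<delta>' | \<delta>'. \<delta>' \<subseteq> PF N \<and> refines \<delta> \<delta>'}"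

end

theory Submission
  imports Defs
begin

text \<open>The family L lives on Z and R on its complement. The inequality \<open>\<le>\<close> is
  monotonicity, since L and R refine \<open>L \<union> R\<close>. For \<open>\<ge>\<close>, take optimal refinements of L
  and of R; discarding their members whose domain leaves Z (respectively meets Z) keeps
  them refinements, because a member refining some \<open>\<sigma>\<close> has domain inside \<open>dom \<sigma>\<close>.
  The union of the two trimmed families refines \<open>L \<union> R\<close>, and a subfamily of it splits
  into a part on Z and a part off Z: the disjoint families witnessing the bound for the
  two parts have disjoint supports, so together they witness it for the whole.\<close>

lemma finite_hn_values: "finite (insert 0 {k + 1 | k. k < N \<and> hn_good k A})"
  by (rule finite_subset[of _ "{..N}"]) auto

lemma hn_le: "hn N A \<le> N"
  unfolding hn_def by (rule Max.boundedI) (auto simp: finite_hn_values)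

lemma hn_good_le: "hn_good k A \<Longrightarrow> j \<le> k \<Longrightarrow> hn_good j A"
  unfolding hn_good_def by (meson le_trans mult_le_mono1)

lemma hn_good_subset: "hn_good k B \<Longrightarrow> A \<subseteq> B \<Longrightarrow> hn_good k A"
  unfolding hn_good_def by (meson order_trans)

lemma less_hn_if_hn_good: "k < N \<Longrightarrow> hn_good k A \<Longrightarrow> k < hn N A"
  unfolding hn_def using finite_hn_values[of N A] by (subst Suc_le_eq[symmetric], intro Max_ge) auto

lemma hn_good_if_less_hn:
  assumes "k < hn N A"
  shows "hn_good k A"
proof -
  have "hn N A \<in> insert 0 {k + 1 | k. k < N \<and> hn_good k A}"
    unfolding hn_def using finite_hn_values[of N A] by (intro Max_in) auto
  then obtain j where "hn N A = j + 1" "hn_good j A"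
    using assms by auto
  then show ?thesis
    using assms by (auto intro: hn_good_le)
qed

lemma refines_if_subset: "A \<subseteq> B \<Longrightarrow> refines A B"
  unfolding refines_def by (auto intro: map_le_refl)

lemma refines_trans: "refines A B \<Longrightarrow> refines B C \<Longrightarrow> refines A C"
  unfolding refines_def by (meson map_le_trans)

lemma refines_PF: "refines A (PF N)"
  unfolding refines_def PF_def by (auto intro!: bexI[of _ Map.empty])

lemma finite_Union_dom:
  assumes "D \<subseteq> PF N"
  shows "finite (\<Union>\<sigma>\<in>D. dom \<sigma>)"
  using assms unfolding PF_def by (auto intro: finite_subset[of _ "{..<N}"])

lemma refines_restrict_dom:
  assumes "refines A B" and "\<forall>\<sigma>\<in>A. dom \<sigma> \<subseteq> Z"
  shows "refines A {\<rho>\<in>B. dom \<rho> \<subseteq> Z}"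
  unfolding refines_def
proof
  fix \<sigma> assume "\<sigma> \<in> A"
  then obtain \<rho> where "\<rho> \<in> B" "\<rho> \<subseteq>\<^sub>m \<sigma>"
    using assms(1) unfolding refines_def by blast
  moreover have "dom \<rho> \<subseteq> Z"
    using map_le_implies_dom_le[OF \<open>\<rho> \<subseteq>\<^sub>m \<sigma>\<close>] assms(2) \<open>\<sigma> \<in> A\<close> by blast
  ultimately show "\<exists>\<rho>\<in>{\<rho> \<in> B. dom \<rho> \<subseteq> Z}. \<rho> \<subseteq>\<^sub>m \<sigma>" by blast
qed

lemma finite_HN_values: "finite {hn N \<delta>' | \<delta>'. \<delta>' \<subseteq> PF N \<and> refines A \<delta>'}"
  by (rule finite_subset[of _ "{..N}"]) (auto simp: hn_le)

lemma HN_attained: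
  obtains \<delta>' where "\<delta>' \<subseteq> PF N" "refines A \<delta>'" "HN N A = hn N \<delta>'"
proof -
  have "HN N A \<in> {hn N \<delta>' | \<delta>'. \<delta>' \<subseteq> PF N \<and> refines A \<delta>'}"
    unfolding HN_def using finite_HN_values[of N A] refines_PF[of A N] by (intro Max_in) auto
  then show ?thesis using that by auto
qed

lemma hn_le_HN: "\<delta>' \<subseteq> PF N \<Longrightarrow> refines A \<delta>' \<Longrightarrow> hn N \<delta>' \<le> HN N A"
  unfolding HN_def using finite_HN_values[of N A] by (intro Max_ge) auto

lemma HN_antimono: "refines A B \<Longrightarrow> HN N B \<le> HN N A"
  by (metis HN_attained hn_le_HN refines_trans)

lemma hn_good_Un_separated:
  assumes good: "hn_good k A" "hn_good k B"
    and PF: "A \<subseteq> PF N" "B \<subseteq> PF N"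
    and dom: "\<forall>\<rho>\<in>A. dom \<rho> \<subseteq> Z" "\<forall>\<rho>\<in>B. dom \<rho> \<subseteq> - Z"
  shows "hn_good k (A \<union> B)"
  unfolding hn_good_def
proof (intro allI impI)
  fix S assume S: "S \<subseteq> A \<union> B"
  obtain DA where DA: "DA \<subseteq> S \<inter> A"
    "\<forall>\<sigma>\<in>DA. \<forall>\<tau>\<in>DA. \<sigma> \<noteq> \<tau> \<longrightarrow> dom \<sigma> \<inter> dom \<tau> = {}"
    "k * card (S \<inter> A) \<le> card (\<Union>\<sigma>\<in>DA. dom \<sigma>)"
    using good(1) unfolding hn_good_def by (meson inf_le2)
  obtain DB where DB: "DB \<subseteq> S \<inter> B"
    "\<forall>\<sigma>\<in>DB. \<forall>\<tau>\<in>DB. \<sigma> \<noteq> \<tau> \<longrightarrow> dom \<sigma> \<inter> dom \<tau> = {}"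
    "k * card (S \<inter> B) \<le> card (\<Union>\<sigma>\<in>DB. dom \<sigma>)"
    using good(2) unfolding hn_good_def by (meson inf_le2)
  have supports: "(\<Union>\<sigma>\<in>DA. dom \<sigma>) \<subseteq> Z" "(\<Union>\<sigma>\<in>DB. dom \<sigma>) \<subseteq> - Z"
    using DA(1) DB(1) dom by blast+
  have disjoint: "\<forall>\<sigma>\<in>DA \<union> DB. \<forall>\<tau>\<in>DA \<union> DB. \<sigma> \<noteq> \<tau> \<longrightarrow> dom \<sigma> \<inter> dom \<tau> = {}"
    using DA(2) DB(2) supports by blast
  have "k * card S \<le> k * card (S \<inter> A) + k * card (S \<inter> B)"
    using card_Un_le[of "S \<inter> A" "S \<inter> B"] S
    by (metis Int_Un_distrib Int_absorb2 add_mult_distrib2 mult_le_mono2)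
  also have "\<dots> \<le> card (\<Union>\<sigma>\<in>DA. dom \<sigma>) + card (\<Union>\<sigma>\<in>DB. dom \<sigma>)"
    using DA(3) DB(3) by linarith
  also have "\<dots> = card (\<Union>\<sigma>\<in>DA \<union> DB. dom \<sigma>)"
  proof -
    have "DA \<subseteq> PF N" "DB \<subseteq> PF N"
      using DA(1) DB(1) PF by blast+
    then have "finite (\<Union>\<sigma>\<in>DA. dom \<sigma>)" "finite (\<Union>\<sigma>\<in>DB. dom \<sigma>)"
      by (simp_all add: finite_Union_dom)
    moreover have "(\<Union>\<sigma>\<in>DA. dom \<sigma>) \<inter> (\<Union>\<sigma>\<in>DB. dom \<sigma>) = {}"
      using supports by blast
    ultimately show ?thesis
      by (simp add: UN_Un card_Un_disjoint)
  qed
  finally show "\<exists>\<delta>''\<subseteq>S. (\<forall>\<sigma>\<in>\<delta>''. \<forall>\<tau>\<in>\<delta>''. \<sigma> \<noteq> \<tau> \<longrightarrow> dom \<sigma> \<inter> dom \<tau> = {}) \<and>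
      k * card S \<le> card (\<Union>\<sigma>\<in>\<delta>''. dom \<sigma>)"
    using disjoint DA(1) DB(1) by (intro exI[of _ "DA \<union> DB"]) auto
qed

lemma less_HN_Un_separated:
  assumes "k < HN N A" "k < HN N B"
    and "\<forall>\<sigma>\<in>A. dom \<sigma> \<subseteq> Z" "\<forall>\<sigma>\<in>B. dom \<sigma> \<subseteq> - Z"
  shows "k < HN N (A \<union> B)"
proof -
  obtain dA where dA: "dA \<subseteq> PF N" "refines A dA" "HN N A = hn N dA"
    by (rule HN_attained)
  obtain dB where dB: "dB \<subseteq> PF N" "refines B dB" "HN N B = hn N dB"
    by (rule HN_attained)
  define fA where "fA = {\<rho>\<in>dA. dom \<rho> \<subseteq> Z}"
  define fB where "fB = {\<rho>\<in>dB. dom \<rho> \<subseteq> - Z}"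
  have PF: "fA \<subseteq> PF N" "fB \<subseteq> PF N"
    using dA(1) dB(1) by (auto simp: fA_def fB_def)
  have "hn_good k dA" "hn_good k dB"
    using assms(1,2) dA(3) dB(3) by (simp_all add: hn_good_if_less_hn)
  then have "hn_good k fA" "hn_good k fB"
    by (auto simp: fA_def fB_def elim: hn_good_subset)
  then have good: "hn_good k (fA \<union> fB)"
    using PF by (rule hn_good_Un_separated[where Z = Z]) (simp_all add: fA_def fB_def)
  have refines: "refines (A \<union> B) (fA \<union> fB)"
    using refines_restrict_dom[OF dA(2) assms(3)] refines_restrict_dom[OF dB(2) assms(4)]
    unfolding refines_def fA_def fB_def by blast
  have "k < N"
    using assms(1) dA(3) hn_le[of N dA] by simp
  then have "k < hn N (fA \<union> fB)"
    using good by (rule less_hn_if_hn_good)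
  also have "\<dots> \<le> HN N (A \<union> B)"
    using PF refines by (intro hn_le_HN) auto
  finally show ?thesis .
qed

lemma HN_Un_separated:
  assumes "\<forall>\<sigma>\<in>A. dom \<sigma> \<subseteq> Z" "\<forall>\<sigma>\<in>B. dom \<sigma> \<subseteq> - Z"
  shows "HN N (A \<union> B) = min (HN N A) (HN N B)"
proof (rule antisym)
  show "HN N (A \<union> B) \<le> min (HN N A) (HN N B)"
    by (simp add: HN_antimono refines_if_subset)
  show "min (HN N A) (HN N B) \<le> HN N (A \<union> B)"
  proof (rule ccontr)
    assume "\<not> min (HN N A) (HN N B) \<le> HN N (A \<union> B)"
    then have "HN N (A \<union> B) < HN N (A \<union> B)"
      by (intro less_HN_Un_separated[OF _ _ assms]) auto
    then show False by simp
  qed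
qed

theorem theorem6p27:
  fixes N :: nat and \<delta> :: "(nat \<rightharpoonup> bool) set" and Z :: "nat set"
  assumes "\<delta> \<subseteq> PF N" and "Z \<subseteq> {..<N}"
  shows "HN N (Lset N \<delta> Z \<union> Rset N \<delta> Z) = min (HN N (Lset N \<delta> Z)) (HN N (Rset N \<delta> Z))"
proof (rule HN_Un_separated)
  show "\<forall>\<sigma>\<in>Lset N \<delta> Z. dom \<sigma> \<subseteq> Z"
    unfolding Lset_def by (auto simp: restrict_map_def split: if_splits)
  show "\<forall>\<sigma>\<in>Rset N \<delta> Z. dom \<sigma> \<subseteq> - Z"
    unfolding Rset_def by (auto simp: restrict_map_def split: if_splits)
qed

end
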